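(* For every integer $k\ge 2$ and every positive integer $n$, \[ \mathrm{ex}_3\big(n, C^{(3)}_{2k+1}\big)\le t_{2k+1}(n)+4\,\mathrm{ex}(n,C_{2k})+12\,\mathrm{ex}^{\mathrm{lin}}_3\big(n, C^{(3)}_{2k+1}\big). \]
   Context: A 3-uniform hypergraph is a set of 3-element subsets (hyperedges) of a vertex set. A Berge cycle of length $m$ in a hypergraph is a family of $m$ distinct hyperedges $H_0,\dots,H_{m-1}$ for which there exist distinct vertices $v_0,\dots,v_{m-1}$ with $\{v_i,v_{i+1}\}\subset H_i$ for $0\le i\le m-1$ (indices mod $m$). $C^{(3)}_m$ denotes the family of 3-uniform Berge cycles of length $m$; a hypergraph is $C^{(3)}_m$-free if it contains no Berge cycle of length $m$. A hypergraph is linear if any two distinct hyperedges share at most one vertex. $\mathrm{ex}_3(n,C^{(3)}_m)$ (resp. $\mathrm{ex}^{\mathrm{lin}}_3(n,C^{(3)}_m)$) is the maximum number of hyperedges in a 3-uniform (resp. 3-uniform linear) hypergraph on $n$ vertices with no Berge cycle of length $m$. $\mathrm{ex}(n,C_{2k})$ is the maximum number of edges of a simple graph on $n$ vertices with no cycle of length $2k$. $t_\ell(n)$ is the maximum number of triangles in a simple graph on $n$ vertices containing no cycle of length $\ell$. *)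

theory Defs
  imports Main
begin

definition triple_hypergraph :: "nat \<Rightarrow> nat set set \<Rightarrow> bool" where
  "triple_hypergraph n H \<longleftrightarrow> (\<forall>e\<in>H. e \<subseteq> {..<n} \<and> card e = 3)"

definition linear_hypergraph :: "nat set set \<Rightarrow> bool" where
  "linear_hypergraph H \<longleftrightarrow> (\<forall>A\<in>H. \<forall>B\<in>H. A \<noteq> B \<longrightarrow> card (A \<inter> B) \<le> 1)"

definition has_berge_cycle :: "nat set set \<Rightarrow> nat \<Rightarrow> bool" where
  "has_berge_cycle H m \<longleftrightarrow>
     (\<exists>E :: nat \<Rightarrow> nat set. \<exists>v :: nat \<Rightarrow> nat.
        inj_on E {..<m} \<and> inj_on v {..<m} \<and>
        (\<forall>i<m. E i \<in> H \<and> {v i, v ((i + 1) mod m)} \<subseteq> E i))"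

definition ex3 :: "nat \<Rightarrow> nat \<Rightarrow> nat" where
  "ex3 n m = Max {card H | H. triple_hypergraph n H \<and> \<not> has_berge_cycle H m}"

definition ex3_lin :: "nat \<Rightarrow> nat \<Rightarrow> nat" where
  "ex3_lin n m = Max {card H | H. triple_hypergraph n H \<and> linear_hypergraph H
                                   \<and> \<not> has_berge_cycle H m}"

definition simple_graph :: "nat \<Rightarrow> nat set set \<Rightarrow> bool" where
  "simple_graph n G \<longleftrightarrow> (\<forall>e\<in>G. e \<subseteq> {..<n} \<and> card e = 2)"

definition has_cycle :: "nat set set \<Rightarrow> nat \<Rightarrow> bool" where
  "has_cycle G m \<longleftrightarrow>
     (\<exists>v :: nat \<Rightarrow> nat. inj_on v {..<m} \<and> (\<forall>i<m. {v i, v ((i + 1) mod m)} \<in> G))"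

definition ex_graph :: "nat \<Rightarrow> nat \<Rightarrow> nat" where
  "ex_graph n m = Max {card G | G. simple_graph n G \<and> \<not> has_cycle G m}"

definition triangles :: "nat set set \<Rightarrow> nat set set" where
  "triangles G = {T. card T = 3 \<and> (\<forall>x\<in>T. \<forall>y\<in>T. x \<noteq> y \<longrightarrow> {x, y} \<in> G)}"

definition t_tri :: "nat \<Rightarrow> nat \<Rightarrow> nat" where
  "t_tri m n = Max {card (triangles G) | G. simple_graph n G \<and> \<not> has_cycle G m}"

end

theory Submission
  imports Defs
begin

text \<open>Sort the hyperedges by the codegrees of their three pairs.  If every pair of a
  hyperedge has codegree at least two, the hyperedge is a triangle in the graph of such pairs,
  and that graph has no cycle of length \<open>2k+1\<close>, since such a cycle lifts to a Berge cycle.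
  Every other hyperedge has a private pair of codegree one.  If it also contains a pair of
  codegree at least three, a uniformly random cut separates its private pair from its third
  vertex with probability 1/4; the private pairs of the hyperedges so separated form a graph
  without cycles of length \<open>2k\<close>, because such a cycle, closed through a heavy pair, would
  give a Berge \<open>(2k+1)\<close>-cycle.  In the remaining hyperedges all pairs have codegree at most
  two, so each meets at most two others in two vertices, and a greedy choice keeps a third of
  them as a linear subhypergraph.\<close>

section \<open>Berge cycles\<close>

lemma mod_succ_neq: "2 \<le> (m::nat) \<Longrightarrow> i < m \<Longrightarrow> (i + 1) mod m \<noteq> i"
  by (cases "i + 1 = m") auto

lemma mod_succ_succ_neq: "3 \<le> (m::nat) \<Longrightarrow> i < m \<Longrightarrow> ((i + 1) mod m + 1) mod m \<noteq> i"
  by (cases "i + 1 = m"; cases "i + 2 = m") auto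

lemma mod_succ_inj: "(i::nat) < m \<Longrightarrow> j < m \<Longrightarrow> (i + 1) mod m = (j + 1) mod m \<Longrightarrow> i = j"
  by (cases "i + 1 = m"; cases "j + 1 = m") auto

lemma cycle_edges_inj:
  fixes m :: nat
  assumes "3 \<le> m" "inj_on v {..<m}" "i < m" "j < m"
    and "{v i, v ((i + 1) mod m)} = {v j, v ((j + 1) mod m)}"
  shows "i = j"
proof -
  have "(i + 1) mod m < m" "(j + 1) mod m < m" using assms(1) by auto
  with assms have "i = j \<or> (i = (j + 1) mod m \<and> (i + 1) mod m = j)"
    by (auto simp: doubleton_eq_iff dest: inj_onD mod_succ_inj)
  then show ?thesis using mod_succ_succ_neq[OF assms(1,4)] by auto
qed

lemma has_berge_cycle_mono: "has_berge_cycle H m \<Longrightarrow> H \<subseteq> H' \<Longrightarrow> has_berge_cycle H' m"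
  unfolding has_berge_cycle_def by blast

text \<open>The first hyperedge of the cycle is dropped: the step from \<open>v 0\<close> to \<open>v 1\<close> is replaced
  by the detour \<open>v 0, w, v 1\<close> through \<open>A\<close> and \<open>B\<close>.\<close>
lemma berge_cycle_insert_vertex:
  assumes "2 \<le> m" and v: "inj_on v {..<m}" and E: "inj_on E {..<m}"
    and cyc: "\<And>i. 1 \<le> i \<Longrightarrow> i < m \<Longrightarrow> E i \<in> H \<and> {v i, v ((i + 1) mod m)} \<subseteq> E i"
    and w: "w \<notin> v ` {..<m}"
    and A: "A \<in> H" "{v 0, w} \<subseteq> A" and B: "B \<in> H" "{w, v 1} \<subseteq> B"
    and new: "A \<noteq> B" "A \<notin> E ` {1..<m}" "B \<notin> E ` {1..<m}"
  shows "has_berge_cycle H (Suc m)"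
proof -
  define V where "V j = (if j = 0 then v 0 else if j = 1 then w else v (j - 1))" for j
  define F where "F j = (if j = 0 then A else if j = 1 then B else E (j - 1))" for j
  have "inj_on V {..<Suc m}"
  proof (rule inj_onI)
    fix x y assume xy: "x \<in> {..<Suc m}" "y \<in> {..<Suc m}" "V x = V y"
    show "x = y"
    proof (cases "x = 0 \<or> x = 1 \<or> y = 0 \<or> y = 1")
      case True
      then show ?thesis using xy w v \<open>2 \<le> m\<close> unfolding V_def
        by (auto split: if_splits dest: inj_onD)
    next
      case False
      then have "v (x - 1) = v (y - 1)" using xy by (simp add: V_def)
      then show ?thesis using xy False by (auto dest: inj_onD[OF v])
    qed
  qed
  moreover have "inj_on F {..<Suc m}"
  proof (rule inj_onI)
    fix x y assume xy: "x \<in> {..<Suc m}" "y \<in> {..<Suc m}" "F x = F y"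
    have old: "E (z - 1) \<in> E ` {1..<m}" if "2 \<le> z" "z < Suc m" for z
      using that by (intro imageI) auto
    show "x = y"
    proof (cases "x \<le> 1 \<or> y \<le> 1")
      case True
      then show ?thesis using xy new old[of x] old[of y] unfolding F_def
        by (cases "x \<le> 1"; cases "y \<le> 1") (auto split: if_splits)
    next
      case False
      then have "E (x - 1) = E (y - 1)" using xy by (simp add: F_def)
      then show ?thesis using xy False by (auto dest: inj_onD[OF E])
    qed
  qed
  moreover have "F j \<in> H \<and> {V j, V ((j + 1) mod Suc m)} \<subseteq> F j" if j: "j < Suc m" for j
  proof -
    consider "j = 0" | "j = 1" | "2 \<le> j" "j < m" | "j = m" using j \<open>2 \<le> m\<close> by linarith
    then show ?thesis
    proof cases
      case 3
      then have "(j - 1 + 1) mod m = j" "(j + 1) mod Suc m = j + 1" by auto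
      then show ?thesis using 3 cyc[of "j - 1"] by (simp add: V_def F_def)
    next
      case 4
      then show ?thesis using \<open>2 \<le> m\<close> cyc[of "m - 1"] by (simp add: V_def F_def)
    qed (use A B \<open>2 \<le> m\<close> in \<open>simp_all add: V_def F_def\<close>)
  qed
  ultimately show ?thesis unfolding has_berge_cycle_def by blast
qed

definition codegree :: "'a set set \<Rightarrow> 'a set \<Rightarrow> nat" where
  "codegree H e = card {h \<in> H. e \<subseteq> h}"

lemma codegree_pos: "finite H \<Longrightarrow> h \<in> H \<Longrightarrow> e \<subseteq> h \<Longrightarrow> 0 < codegree H e"
  unfolding codegree_def by (subst card_gt_0_iff) auto

lemma codegree_one_unique:
  assumes "codegree H e = 1" "h \<in> H" "e \<subseteq> h" "h' \<in> H" "e \<subseteq> h'"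
  shows "h' = h"
proof -
  obtain t where t: "{h \<in> H. e \<subseteq> h} = {t}"
    using assms(1) unfolding codegree_def by (rule card_1_singletonE)
  have "h' \<in> {t}" "h \<in> {t}" using assms(2-5) by (simp_all add: t[symmetric])
  then show ?thesis by simp
qed

lemma codegree_le_two_other:
  assumes "finite H" "codegree H e \<le> 2" "h \<in> H" "e \<subseteq> h"
  shows "card ({h' \<in> H. e \<subseteq> h'} - {h}) \<le> 1"
proof -
  have "h \<in> {h' \<in> H. e \<subseteq> h'}" using assms(3,4) by simp
  then show ?thesis using assms(1,2) by (simp add: codegree_def card_Diff_singleton)
qed

lemma codegree_gt_card_avoid:
  assumes "finite A" "card A < codegree H e"
  obtains h where "h \<in> H" "e \<subseteq> h" "h \<notin> A"
proof -
  have "\<not> {h \<in> H. e \<subseteq> h} \<subseteq> A"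
  proof
    assume "{h \<in> H. e \<subseteq> h} \<subseteq> A"
    then have "codegree H e \<le> card A" unfolding codegree_def by (rule card_mono[OF assms(1)])
    with assms(2) show False by simp
  qed
  then show ?thesis using that by blast
qed

lemma pairs_in_three_set:
  assumes "card B = 3" "e \<subseteq> B" "f \<subseteq> B" "card e = 2" "card f = 2" "e \<noteq> f"
  shows "B = e \<union> f" "e \<inter> f \<noteq> {}"
proof -
  have "finite B" using assms(1) by (simp add: card_ge_0_finite)
  then have fin: "finite e" "finite f" using assms(2,3) by (auto intro: finite_subset)
  have "\<not> f \<subseteq> e" using card_subset_eq[OF fin(1)] assms(4-6) by auto
  then have "e \<subset> e \<union> f" by blast
  then have "card e < card (e \<union> f)" using fin by (simp add: psubset_card_mono)
  moreover have "card (e \<union> f) \<le> card B" using assms(2,3) \<open>finite B\<close> by (simp add: card_mono)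
  ultimately have c3: "card (e \<union> f) = 3" using assms(1,4) by simp
  then show "B = e \<union> f"
    using card_subset_eq[OF \<open>finite B\<close>, of "e \<union> f"] assms(1-3) by simp
  show "e \<inter> f \<noteq> {}"
    using card_Un_Int[OF fin] c3 assms(4,5) by auto
qed

lemma pair_through_third_vertex:
  assumes "card h = 3" "p \<subseteq> h" "card p = 2" "f \<subseteq> h" "card f = 2" "f \<noteq> p"
  obtains u w where "h - p = {w}" "u \<in> p" "f = {u, w}"
proof -
  have "finite h" using assms(1) by (simp add: card_ge_0_finite)
  then have "card (h - p) = 1" using assms(1-3) by (simp add: card_Diff_subset finite_subset)
  then obtain w where w: "h - p = {w}" by (rule card_1_singletonE)
  have "h = p \<union> f" "p \<inter> f \<noteq> {}"
    using pairs_in_three_set[OF assms(1,2,4,3,5)] assms(6) by auto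
  then obtain u where u: "u \<in> p" "u \<in> f" by blast
  have "{u, w} \<subseteq> f" "u \<noteq> w" using w u \<open>h = p \<union> f\<close> by auto
  then have "f = {u, w}"
    using card_subset_eq[of f "{u, w}"] assms(5) by (simp add: card_ge_0_finite)
  with w u(1) show ?thesis using that by blast
qed

lemma card_le_by_averaging:
  fixes P :: "'a \<Rightarrow> 'b \<Rightarrow> bool"
  assumes "finite \<Omega>" "\<Omega> \<noteq> {}" "finite M"
    and share: "\<And>h. h \<in> M \<Longrightarrow> c * card {X \<in> \<Omega>. P X h} = card \<Omega>"
    and bound: "\<And>X. X \<in> \<Omega> \<Longrightarrow> card {h \<in> M. P X h} \<le> K"
  shows "card M \<le> c * K"
proof -
  have "(\<Sum>X\<in>\<Omega>. card {h \<in> M. P X h}) = (\<Sum>X\<in>\<Omega>. \<Sum>h\<in>M. if P X h then 1 else 0)"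
    using assms(3) by (simp add: sum.inter_filter[symmetric])
  also have "\<dots> = (\<Sum>h\<in>M. \<Sum>X\<in>\<Omega>. if P X h then 1 else 0)" by (rule sum.swap)
  also have "\<dots> = (\<Sum>h\<in>M. card {X \<in> \<Omega>. P X h})"
    using assms(1) by (simp add: sum.inter_filter[symmetric])
  finally have double_count: "(\<Sum>X\<in>\<Omega>. card {h \<in> M. P X h}) = (\<Sum>h\<in>M. card {X \<in> \<Omega>. P X h})" .
  have "card M * card \<Omega> = c * (\<Sum>h\<in>M. card {X \<in> \<Omega>. P X h})"
    using share by (simp add: sum_distrib_left)
  also have "\<dots> = c * (\<Sum>X\<in>\<Omega>. card {h \<in> M. P X h})" by (simp add: double_count)
  also have "\<dots> \<le> c * (\<Sum>X\<in>\<Omega>. K)" using bound by (intro mult_le_mono2 sum_mono) auto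
  also have "\<dots> = (c * K) * card \<Omega>" by simp
  finally show ?thesis using assms(1,2) by (simp add: card_gt_0_iff)
qed

lemma card_Pow_trace_eq:
  assumes "finite U" "h \<subseteq> U" "q \<subseteq> h"
  shows "card {X \<in> Pow U. X \<inter> h = q} = 2 ^ (card U - card h)"
proof -
  have "bij_betw (\<lambda>X. X - h) {X \<in> Pow U. X \<inter> h = q} (Pow (U - h))"
    by (rule bij_betw_byWitness[where f' = "\<lambda>Z. Z \<union> q"]) (use assms in auto)
  then have "card {X \<in> Pow U. X \<inter> h = q} = card (Pow (U - h))" by (rule bij_betw_same_card)
  also have "\<dots> = 2 ^ (card U - card h)"
    using assms by (simp add: card_Pow card_Diff_subset finite_subset)
  finally show ?thesis .
qed

definition splits :: "'a set \<Rightarrow> 'a set \<Rightarrow> 'a set \<Rightarrow> bool" where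
  "splits X h p \<longleftrightarrow> (p \<subseteq> X \<and> h - p \<subseteq> - X) \<or> (p \<subseteq> - X \<and> h - p \<subseteq> X)"

lemma splits_Compl [simp]: "splits (- X) h p = splits X h p"
  unfolding splits_def by auto

lemma card_splitting_subsets:
  assumes "finite U" "h \<subseteq> U" "card h = 3" "p \<subseteq> h" "card p = 2"
  shows "4 * card {X \<in> Pow U. splits X h p} = 2 ^ card U"
proof -
  have "p \<noteq> {}" using assms(5) by auto
  then have "p \<noteq> h - p" by blast
  have "{X \<in> Pow U. splits X h p} = {X \<in> Pow U. X \<inter> h = p} \<union> {X \<in> Pow U. X \<inter> h = h - p}"
    using assms(4) unfolding splits_def by blast
  moreover have "{X \<in> Pow U. X \<inter> h = p} \<inter> {X \<in> Pow U. X \<inter> h = h - p} = {}"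
    using \<open>p \<noteq> h - p\<close> by blast
  moreover have "finite {X \<in> Pow U. X \<inter> h = q}" for q using assms(1) by simp
  ultimately have "card {X \<in> Pow U. splits X h p} = 2 * 2 ^ (card U - 3)"
    using card_Pow_trace_eq[OF assms(1,2)] assms(3,4) by (simp add: card_Un_disjoint)
  moreover obtain r where "card U = r + 3"
    using card_mono[OF assms(1,2)] assms(3) le_Suc_ex by (metis add.commute)
  ultimately show ?thesis by (simp add: power_add)
qed

lemma independent_subset_degree_bound:
  fixes R :: "'a \<Rightarrow> 'a \<Rightarrow> bool"
  assumes "finite S" "\<forall>x y. R x y \<longrightarrow> R y x" "\<forall>x\<in>S. card {y \<in> S. y \<noteq> x \<and> R x y} \<le> d"
  shows "\<exists>I\<subseteq>S. (\<forall>x\<in>I. \<forall>y\<in>I. x \<noteq> y \<longrightarrow> \<not> R x y) \<and> card S \<le> (d + 1) * card I"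
  using assms
proof (induction "card S" arbitrary: S rule: less_induct)
  case less
  show ?case
  proof (cases "S = {}")
    case False
    then obtain x where x: "x \<in> S" by auto
    define Nx where "Nx = {y \<in> S. y \<noteq> x \<and> R x y}"
    define S' where "S' = S - insert x Nx"
    have "finite S'" using less.prems by (simp add: S'_def)
    have smaller: "card S' < card S"
      using x less.prems by (intro psubset_card_mono) (auto simp: S'_def)
    have degree: "\<forall>z\<in>S'. card {y \<in> S'. y \<noteq> z \<and> R z y} \<le> d"
    proof
      fix z assume z: "z \<in> S'"
      have "card {y \<in> S'. y \<noteq> z \<and> R z y} \<le> card {y \<in> S. y \<noteq> z \<and> R z y}"
        using less.prems by (intro card_mono) (auto simp: S'_def)
      also have "\<dots> \<le> d" using less.prems z by (auto simp: S'_def)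
      finally show "card {y \<in> S'. y \<noteq> z \<and> R z y} \<le> d" .
    qed
    obtain I where I: "I \<subseteq> S'" "\<forall>x\<in>I. \<forall>y\<in>I. x \<noteq> y \<longrightarrow> \<not> R x y"
      "card S' \<le> (d + 1) * card I"
      using less.hyps[OF smaller \<open>finite S'\<close> less.prems(2) degree] by blast
    have "finite I" "x \<notin> I" using I(1) \<open>finite S'\<close> finite_subset by (auto simp: S'_def)
    have indep: "\<forall>a\<in>insert x I. \<forall>b\<in>insert x I. a \<noteq> b \<longrightarrow> \<not> R a b"
    proof (intro ballI impI)
      fix a b assume "a \<in> insert x I" "b \<in> insert x I" "a \<noteq> b"
      moreover have "\<not> R x y" if "y \<in> I" for y
        using that I(1) by (auto simp: S'_def Nx_def)
      ultimately show "\<not> R a b" using I(2) less.prems(2) by blast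
    qed
    have "card S \<le> card (S' \<union> insert x Nx)"
      using less.prems by (intro card_mono) (auto simp: S'_def Nx_def)
    also have "\<dots> \<le> card S' + card (insert x Nx)" by (rule card_Un_le)
    also have "\<dots> \<le> card S' + (card Nx + 1)"
      using less.prems(1) by (simp add: card_insert_if Nx_def)
    also have "\<dots> \<le> card S' + (d + 1)" using less.prems x by (auto simp: Nx_def)
    also have "\<dots> \<le> (d + 1) * card (insert x I)" using I(3) \<open>finite I\<close> \<open>x \<notin> I\<close> by simp
    finally show ?thesis using indep I(1) x by (intro exI[of _ "insert x I"]) (auto simp: S'_def)
  qed simp
qed

lemma card_le_two_power: "G \<subseteq> Pow {..<n} \<Longrightarrow> card G \<le> 2 ^ n"
  using card_mono[of "Pow {..<n}" G] by (simp add: card_Pow)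

lemma le_Max_of_bounded:
  fixes f :: "'a \<Rightarrow> nat"
  assumes "\<And>G. P G \<Longrightarrow> f G \<le> b" "P G"
  shows "f G \<le> Max {f G | G. P G}"
proof (rule Max_ge)
  show "finite {f G | G. P G}"
    unfolding finite_nat_set_iff_bounded_le using assms(1) by blast
qed (use assms(2) in blast)

lemma triangles_subset_Pow:
  assumes "simple_graph n G"
  shows "triangles G \<subseteq> Pow {..<n}"
proof
  fix T assume T: "T \<in> triangles G"
  show "T \<in> Pow {..<n}"
  proof (rule PowI, rule subsetI)
    fix x assume x: "x \<in> T"
    have "\<not> T \<subseteq> {x}" using T card_mono[of "{x}" T] by (auto simp: triangles_def)
    then obtain y where "y \<in> T" "y \<noteq> x" by blast
    then have "{x, y} \<in> G" using T x by (auto simp: triangles_def)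
    then show "x \<in> {..<n}" using assms by (auto simp: simple_graph_def)
  qed
qed

lemma card_le_ex_graph:
  assumes "simple_graph n G" "\<not> has_cycle G m"
  shows "card G \<le> ex_graph n m"
  unfolding ex_graph_def
proof (rule le_Max_of_bounded[where b = "2 ^ n"])
  show "card G' \<le> 2 ^ n" if "simple_graph n G' \<and> \<not> has_cycle G' m" for G'
    using that by (intro card_le_two_power) (auto simp: simple_graph_def)
qed (use assms in blast)

lemma card_triangles_le_t_tri:
  assumes "simple_graph n G" "\<not> has_cycle G m"
  shows "card (triangles G) \<le> t_tri m n"
  unfolding t_tri_def
proof (rule le_Max_of_bounded[where b = "2 ^ n"])
  show "card (triangles G') \<le> 2 ^ n" if "simple_graph n G' \<and> \<not> has_cycle G' m" for G'
    using that by (intro card_le_two_power triangles_subset_Pow) blast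
qed (use assms in blast)

lemma card_le_ex3_lin:
  assumes "triple_hypergraph n H" "linear_hypergraph H" "\<not> has_berge_cycle H m"
  shows "card H \<le> ex3_lin n m"
  unfolding ex3_lin_def
proof (rule le_Max_of_bounded[where b = "2 ^ n"])
  show "card H' \<le> 2 ^ n"
    if "triple_hypergraph n H' \<and> linear_hypergraph H' \<and> \<not> has_berge_cycle H' m" for H'
    using that by (intro card_le_two_power) (auto simp: triple_hypergraph_def)
qed (use assms in blast)

text \<open>Every hypergraph has a vacuous Berge cycle of length 0, hence \<open>0 < m\<close>.\<close>
lemma ex3_le:
  assumes "0 < m" "\<And>H. triple_hypergraph n H \<Longrightarrow> \<not> has_berge_cycle H m \<Longrightarrow> card H \<le> b"
  shows "ex3 n m \<le> b"
  unfolding ex3_def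
proof (rule Max.boundedI)
  have "card H \<le> 2 ^ n" if "triple_hypergraph n H" for H
    using that by (intro card_le_two_power) (auto simp: triple_hypergraph_def)
  then show "finite {card H | H. triple_hypergraph n H \<and> \<not> has_berge_cycle H m}"
    unfolding finite_nat_set_iff_bounded_le by blast
  have "triple_hypergraph n {}" "\<not> has_berge_cycle {} m"
    using assms(1) by (auto simp: triple_hypergraph_def has_berge_cycle_def)
  then show "{card H | H. triple_hypergraph n H \<and> \<not> has_berge_cycle H m} \<noteq> {}" by blast
qed (use assms(2) in blast)

lemma triple_hypergraph_finite: "triple_hypergraph n H \<Longrightarrow> finite H"
  unfolding triple_hypergraph_def by (rule finite_subset[of H "Pow {..<n}"]) auto

section \<open>Saturated hyperedges\<close>

definition heavy_shadow :: "'a set set \<Rightarrow> 'a set set" where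
  "heavy_shadow H = {e. card e = 2 \<and> 2 \<le> codegree H e}"

lemma heavy_shadow_simple_graph:
  assumes "triple_hypergraph n H"
  shows "simple_graph n (heavy_shadow H)"
  unfolding simple_graph_def
proof
  fix e assume e: "e \<in> heavy_shadow H"
  then obtain h where "h \<in> H" "e \<subseteq> h"
    using codegree_gt_card_avoid[of "{}" H e] by (auto simp: heavy_shadow_def)
  then show "e \<subseteq> {..<n} \<and> card e = 2"
    using assms e by (auto simp: triple_hypergraph_def heavy_shadow_def)
qed

text \<open>Each cycle pair \<open>{v i, v (i+1)}\<close> has codegree at least two, so it lies in a
  hyperedge other than the triangle \<open>{v i, v (i+1), v (i+2)}\<close>; these hyperedges are then
  pairwise distinct, because a 3-set containing two consecutive cycle pairs is that triangle.\<close>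
lemma heavy_shadow_no_cycle:
  assumes H: "\<forall>h\<in>H. card h = 3" and no_berge: "\<not> has_berge_cycle H m" and "3 \<le> m"
  shows "\<not> has_cycle (heavy_shadow H) m"
proof
  assume "has_cycle (heavy_shadow H) m"
  then obtain v where v: "inj_on v {..<m}"
    and heavy: "\<forall>i<m. {v i, v ((i + 1) mod m)} \<in> heavy_shadow H"
    unfolding has_cycle_def by blast
  define s where "s i = (i + 1) mod m" for i
  have s: "s i < m" "i < m \<Longrightarrow> s i \<noteq> i" "i < m \<Longrightarrow> s (s i) \<noteq> i" for i
    using \<open>3 \<le> m\<close> mod_succ_neq[of m i] mod_succ_succ_neq[of m i] by (auto simp: s_def)
  define T where "T i = {v i, v (s i), v (s (s i))}" for i
  have "\<exists>B. B \<in> H \<and> {v i, v (s i)} \<subseteq> B \<and> B \<noteq> T i" if "i < m" for i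
  proof -
    have "2 \<le> codegree H {v i, v (s i)}"
      using heavy that by (simp add: heavy_shadow_def s_def)
    then have "card {T i} < codegree H {v i, v (s i)}" by simp
    then show ?thesis by (rule codegree_gt_card_avoid[OF finite.insertI[OF finite.emptyI]]) blast
  qed
  then obtain E where E: "\<And>i. i < m \<Longrightarrow> E i \<in> H \<and> {v i, v (s i)} \<subseteq> E i \<and> E i \<noteq> T i"
    by metis
  have "inj_on E {..<m}"
  proof (rule inj_onI, rule ccontr)
    fix i j assume "i \<in> {..<m}" "j \<in> {..<m}" and same: "E i = E j" and "i \<noteq> j"
    then have ij: "i < m" "j < m" by auto
    have pair: "card {v x, v (s x)} = 2" if "x < m" for x
    proof -
      have "v x \<noteq> v (s x)" using s[of x] that inj_onD[OF v, of x "s x"] by auto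
      then show ?thesis by simp
    qed
    have "{v i, v (s i)} \<noteq> {v j, v (s j)}"
      using cycle_edges_inj[OF \<open>3 \<le> m\<close> v ij] \<open>i \<noteq> j\<close> by (auto simp: s_def)
    then have union: "E i = {v i, v (s i)} \<union> {v j, v (s j)}"
      and meet: "{v i, v (s i)} \<inter> {v j, v (s j)} \<noteq> {}"
      using pairs_in_three_set[of "E i" "{v i, v (s i)}" "{v j, v (s j)}"] E[OF ij(1)] E[OF ij(2)]
        same H pair ij by auto
    have v_eq: "x = y" if "v x = v y" "x < m" "y < m" for x y
      using that inj_onD[OF v] by blast
    have s_eq: "x = y" if "s x = s y" "x < m" "y < m" for x y
      using that mod_succ_inj[of x m y] by (simp add: s_def)
    from meet consider "v i = v j" | "v i = v (s j)" | "v (s i) = v j" | "v (s i) = v (s j)"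
      by blast
    then have "i = s j \<or> s i = j"
      by cases (use v_eq s_eq s(1) ij \<open>i \<noteq> j\<close> in metis)+
    then have "E i = T i \<or> E j = T j"
      using union same by (auto simp: T_def)
    then show False using E[OF ij(1)] E[OF ij(2)] by blast
  qed
  then have "has_berge_cycle H m"
    using v E unfolding has_berge_cycle_def s_def by blast
  with no_berge show False ..
qed

definition saturated_edges :: "'a set set \<Rightarrow> 'a set set" where
  "saturated_edges H = {h \<in> H. \<forall>e\<subseteq>h. card e = 2 \<longrightarrow> 2 \<le> codegree H e}"

lemma card_saturated_edges_le_t_tri:
  assumes "triple_hypergraph n H" "\<not> has_berge_cycle H m" "3 \<le> m"
  shows "card (saturated_edges H) \<le> t_tri m n"
proof -
  have sg: "simple_graph n (heavy_shadow H)" using assms(1) by (rule heavy_shadow_simple_graph)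
  have "saturated_edges H \<subseteq> triangles (heavy_shadow H)"
    using assms(1) by (auto simp: saturated_edges_def triangles_def heavy_shadow_def triple_hypergraph_def)
  then have "card (saturated_edges H) \<le> card (triangles (heavy_shadow H))"
    using finite_subset[OF triangles_subset_Pow[OF sg]] by (intro card_mono) auto
  also have "\<dots> \<le> t_tri m n"
  proof (rule card_triangles_le_t_tri[OF sg])
    show "\<not> has_cycle (heavy_shadow H) m"
      using assms by (intro heavy_shadow_no_cycle) (auto simp: triple_hypergraph_def)
  qed
  finally show ?thesis .
qed

section \<open>Hyperedges with a private pair\<close>

definition private_pair :: "'a set set \<Rightarrow> 'a set \<Rightarrow> 'a set" where
  "private_pair H h = (SOME p. p \<subseteq> h \<and> card p = 2 \<and> codegree H p = 1)"

lemma private_pair_spec: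
  assumes "finite H" "h \<in> H" "h \<notin> saturated_edges H"
  shows "private_pair H h \<subseteq> h \<and> card (private_pair H h) = 2 \<and> codegree H (private_pair H h) = 1"
proof -
  obtain e where e: "e \<subseteq> h" "card e = 2" "codegree H e < 2"
    using assms(2,3) by (auto simp: saturated_edges_def)
  moreover have "0 < codegree H e" using codegree_pos[OF assms(1,2) e(1)] .
  ultimately have "\<exists>p. p \<subseteq> h \<and> card p = 2 \<and> codegree H p = 1"
    by (intro exI[of _ e]) simp
  then show ?thesis unfolding private_pair_def by (rule someI_ex)
qed

lemma private_pair_inj:
  assumes "finite H"
  shows "inj_on (private_pair H) (H - saturated_edges H)"
proof (rule inj_onI)
  fix h h' assume "h \<in> H - saturated_edges H" "h' \<in> H - saturated_edges H"
    and "private_pair H h = private_pair H h'"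
  then show "h = h'"
    using private_pair_spec[OF assms, of h] private_pair_spec[OF assms, of h']
      codegree_one_unique[of H "private_pair H h" h' h] by auto
qed

text \<open>Here \<open>w\<close> is a vertex off the cycle in its first hyperedge, joined to \<open>v 0\<close> or \<open>v 1\<close>
  by a pair of codegree at least three.  Such a pair lies in a hyperedge \<open>g\<close> avoiding the at
  most two cycle hyperedges through that cycle vertex, and the detour through \<open>w\<close> and \<open>g\<close>
  yields a Berge cycle of length \<open>m + 1\<close>.\<close>
lemma berge_cycle_extend_by_heavy_pair:
  assumes "3 \<le> m" and v: "inj_on v {..<m}" and E: "inj_on E {..<m}"
    and cyc: "\<And>i. i < m \<Longrightarrow> E i \<in> H \<and> {v i, v ((i + 1) mod m)} \<subseteq> E i"
    and w: "w \<in> E 0" "w \<notin> v ` {..<m}"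
    and u: "u = v 0 \<or> u = v 1" and heavy: "3 \<le> codegree H {u, w}"
    and touch: "\<And>i. i < m \<Longrightarrow> u \<in> E i \<Longrightarrow> u = v i \<or> u = v ((i + 1) mod m)"
  shows "has_berge_cycle H (Suc m)"
proof -
  have "2 \<le> m" using \<open>3 \<le> m\<close> by simp
  have v_eq: "x = y" if "v x = v y" "x < m" "y < m" for x y
    using that inj_onD[OF v] by blast
  have E0: "E 0 \<notin> E ` {1..<m}"
    using inj_onD[OF E, of 0] by fastforce
  have old: "\<And>i. 1 \<le> i \<Longrightarrow> i < m \<Longrightarrow> E i \<in> H \<and> {v i, v ((i + 1) mod m)} \<subseteq> E i"
    using cyc by blast
  have avoid: "\<exists>g. g \<in> H \<and> {u, w} \<subseteq> g \<and> g \<noteq> E 0 \<and> g \<noteq> E j" for j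
  proof -
    have "card {E 0, E j} \<le> 2" by (simp add: card_insert_if)
    with heavy have "card {E 0, E j} < codegree H {u, w}" by simp
    then obtain g where "g \<in> H" "{u, w} \<subseteq> g" "g \<notin> {E 0, E j}"
      by (rule codegree_gt_card_avoid[OF finite.insertI[OF finite.insertI[OF finite.emptyI]]])
    then show ?thesis by blast
  qed
  have first: "E 0 \<in> H" "{v 0, v 1} \<subseteq> E 0" using cyc[of 0] \<open>3 \<le> m\<close> by simp_all
  from u show ?thesis
  proof
    assume u0: "u = v 0"
    obtain g where g: "g \<in> H" "{u, w} \<subseteq> g" "g \<noteq> E 0" "g \<noteq> E (m - 1)"
      using avoid by blast
    have g_new: "g \<notin> E ` {1..<m}"
    proof
      assume "g \<in> E ` {1..<m}"
      then obtain i where i: "1 \<le> i" "i < m" "g = E i" by auto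
      then have "(i + 1) mod m = 0"
        using touch[of i] g(2) u0 v_eq[of 0 i] v_eq[of 0 "(i + 1) mod m"] \<open>3 \<le> m\<close> by auto
      then have "i = m - 1" using mod_succ_inj[of i m "m - 1"] i(2) by simp
      then show False using g(4) i(3) by simp
    qed
    show ?thesis
      by (rule berge_cycle_insert_vertex[OF \<open>2 \<le> m\<close> v E old w(2), of g "E 0"])
        (use g g_new first w(1) u0 E0 in auto)
  next
    assume u1: "u = v 1"
    obtain g where g: "g \<in> H" "{u, w} \<subseteq> g" "g \<noteq> E 0" "g \<noteq> E 1"
      using avoid by blast
    have g_new: "g \<notin> E ` {1..<m}"
    proof
      assume "g \<in> E ` {1..<m}"
      then obtain i where i: "1 \<le> i" "i < m" "g = E i" by auto
      then have "i = 1 \<or> (i + 1) mod m = 1"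
        using touch[of i] g(2) u1 v_eq[of 1 i] v_eq[of 1 "(i + 1) mod m"] \<open>3 \<le> m\<close> by auto
      then have "i = 1" using mod_succ_inj[of i m 0] i \<open>3 \<le> m\<close> by auto
      then show False using g(4) i(3) by simp
    qed
    show ?thesis
      by (rule berge_cycle_insert_vertex[OF \<open>2 \<le> m\<close> v E old w(2), of "E 0" g])
        (use g g_new first w(1) u1 E0 in auto)
  qed
qed

text \<open>If the cut \<open>X\<close> separates every hyperedge of \<open>S\<close> into its private pair and its third
  vertex, a cycle of private pairs stays on one side of the cut.  So the third vertex of the
  first hyperedge lies off the cycle, and a pair of codegree at least three through it lengthens
  the cycle into a Berge cycle of length \<open>m + 1\<close>.\<close>
lemma split_private_pairs_no_cycle:
  fixes p :: "nat set \<Rightarrow> nat set"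
  assumes no_berge: "\<not> has_berge_cycle H (Suc m)" and "3 \<le> m"
    and "S \<subseteq> H" and triple: "\<And>h. h \<in> S \<Longrightarrow> card h = 3"
    and priv: "\<And>h. h \<in> S \<Longrightarrow> p h \<subseteq> h \<and> card (p h) = 2 \<and> codegree H (p h) = 1"
    and split: "\<And>h. h \<in> S \<Longrightarrow> splits X h (p h)"
    and heavy: "\<And>h. h \<in> S \<Longrightarrow> \<exists>f\<subseteq>h. card f = 2 \<and> 3 \<le> codegree H f"
  shows "\<not> has_cycle (p ` S) m"
proof
  assume "has_cycle (p ` S) m"
  then obtain v where v: "inj_on v {..<m}" and cyc: "\<forall>i<m. {v i, v ((i + 1) mod m)} \<in> p ` S"
    unfolding has_cycle_def by blast
  have "\<forall>i. \<exists>h. i < m \<longrightarrow> h \<in> S \<and> p h = {v i, v ((i + 1) mod m)}"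
    using cyc by (metis imageE)
  then obtain F where "\<forall>i. i < m \<longrightarrow> F i \<in> S \<and> p (F i) = {v i, v ((i + 1) mod m)}"
    by (metis choice)
  then have F: "\<And>i. i < m \<Longrightarrow> F i \<in> S \<and> p (F i) = {v i, v ((i + 1) mod m)}" by blast
  have F_inj: "inj_on F {..<m}"
  proof (rule inj_onI)
    fix i j assume "i \<in> {..<m}" "j \<in> {..<m}" "F i = F j"
    then show "i = j" using F[of i] F[of j] cycle_edges_inj[OF \<open>3 \<le> m\<close> v, of i j] by auto
  qed
  obtain Y where Y: "v 0 \<in> Y" "\<And>h. h \<in> S \<Longrightarrow> splits Y h (p h)"
  proof (cases "v 0 \<in> X")
    case True
    then show ?thesis using that[of X] split by blast
  next
    case False
    then show ?thesis using that[of "- X"] split by simp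
  qed
  have trace: "F i \<inter> Y = p (F i)" if "i < m" "v i \<in> Y" for i
    using Y(2)[of "F i"] F[OF that(1)] priv[of "F i"] that(2) unfolding splits_def by blast
  have side: "v i \<in> Y" if "i < m" for i
    using that
  proof (induction i)
    case (Suc i)
    then have "(i + 1) mod m = Suc i" by simp
    then show ?case using trace[of i] F[of i] Suc by auto
  qed (use Y(1) in simp)
  have F0: "F 0 \<in> S" "p (F 0) = {v 0, v 1}" "F 0 \<inter> Y = p (F 0)"
    using F[of 0] trace[of 0] side[of 0] \<open>3 \<le> m\<close> by auto
  obtain f where f: "f \<subseteq> F 0" "card f = 2" "3 \<le> codegree H f"
    using heavy[OF F0(1)] by blast
  moreover have "f \<noteq> p (F 0)" using f(3) priv[OF F0(1)] by auto
  ultimately obtain u w where uw: "F 0 - p (F 0) = {w}" "u \<in> p (F 0)" "f = {u, w}"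
    using pair_through_third_vertex[OF triple[OF F0(1)]] priv[OF F0(1)] by metis
  have "w \<notin> Y" using uw(1) F0(3) by blast
  show False
  proof (rule notE[OF no_berge], rule berge_cycle_extend_by_heavy_pair[OF \<open>3 \<le> m\<close> v F_inj])
    show "F i \<in> H \<and> {v i, v ((i + 1) mod m)} \<subseteq> F i" if "i < m" for i
      using F[OF that] priv[of "F i"] \<open>S \<subseteq> H\<close> by auto
    show "w \<in> F 0" "w \<notin> v ` {..<m}" using uw(1) \<open>w \<notin> Y\<close> side by auto
    show "u = v 0 \<or> u = v 1" "3 \<le> codegree H {u, w}" using uw(2,3) F0(2) f(3) by auto
    show "u = v i \<or> u = v ((i + 1) mod m)" if "i < m" "u \<in> F i" for i
      using that trace[OF that(1) side[OF that(1)]] F[OF that(1)] uw(2) F0 by blast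
  qed
qed

lemma card_edges_with_heavy_pair_le:
  assumes H: "triple_hypergraph n H" and no_berge: "\<not> has_berge_cycle H (Suc m)" and "3 \<le> m"
  shows "card {h \<in> H - saturated_edges H. \<exists>f\<subseteq>h. card f = 2 \<and> 3 \<le> codegree H f}
    \<le> 4 * ex_graph n m" (is "card ?M \<le> _")
proof (rule card_le_by_averaging[where \<Omega> = "Pow {..<n}" and P = "\<lambda>X h. splits X h (private_pair H h)"])
  have fin: "finite H" using H by (rule triple_hypergraph_finite)
  then show "finite (Pow {..<n})" "Pow {..<n} \<noteq> {}" "finite ?M" by auto
  show "4 * card {X \<in> Pow {..<n}. splits X h (private_pair H h)} = card (Pow {..<n})"
    if "h \<in> ?M" for h
    using card_splitting_subsets[of "{..<n}" h "private_pair H h"] private_pair_spec[OF fin, of h] H that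
    by (simp add: card_Pow triple_hypergraph_def)
  show "card {h \<in> ?M. splits X h (private_pair H h)} \<le> ex_graph n m" for X
  proof -
    let ?S = "{h \<in> ?M. splits X h (private_pair H h)}"
    have "card ?S = card (private_pair H ` ?S)"
      by (intro card_image[symmetric] inj_on_subset[OF private_pair_inj[OF fin]]) auto
    also have "\<dots> \<le> ex_graph n m"
    proof (rule card_le_ex_graph)
      show "simple_graph n (private_pair H ` ?S)"
        using private_pair_spec[OF fin] H by (fastforce simp: simple_graph_def triple_hypergraph_def)
      show "\<not> has_cycle (private_pair H ` ?S) m"
        by (rule split_private_pairs_no_cycle[OF no_berge \<open>3 \<le> m\<close>, where X = X])
          (use H private_pair_spec[OF fin] in \<open>auto simp: triple_hypergraph_def\<close>)
    qed
    finally show ?thesis .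
  qed
qed

lemma card_overlapping_edges_le:
  assumes "finite H" "h \<in> H" "card h = 3" "p \<subseteq> h" "card p = 2" "codegree H p = 1"
    and light: "\<And>e. e \<subseteq> h \<Longrightarrow> card e = 2 \<Longrightarrow> codegree H e \<le> 2"
  shows "card {h' \<in> H. h' \<noteq> h \<and> 2 \<le> card (h \<inter> h')} \<le> 2"
proof -
  have "finite h" using assms(3) by (simp add: card_ge_0_finite)
  have "card (h - p) = 1" using assms(3-5) \<open>finite h\<close> by (simp add: card_Diff_subset finite_subset)
  then obtain w where w: "h - p = {w}" by (rule card_1_singletonE)
  obtain a b where ab: "p = {a, b}" "a \<noteq> b" using assms(5) by (meson card_2_iff)
  define through where "through z = {h' \<in> H. {z, w} \<subseteq> h'} - {h}" for z
  have through_le: "card (through z) \<le> 1" if "z \<in> p" for z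
    unfolding through_def
    by (rule codegree_le_two_other[OF assms(1) light assms(2)]) (use that w assms(4) in auto)
  have "{h' \<in> H. h' \<noteq> h \<and> 2 \<le> card (h \<inter> h')} \<subseteq> through a \<union> through b"
  proof
    fix h' assume h': "h' \<in> {h' \<in> H. h' \<noteq> h \<and> 2 \<le> card (h \<inter> h')}"
    have "w \<in> h'"
    proof (rule ccontr)
      assume "w \<notin> h'"
      then have "h \<inter> h' \<subseteq> p" using w by auto
      then have "h \<inter> h' = p"
        using card_subset_eq[of p "h \<inter> h'"] h' assms(5) card_mono[of p "h \<inter> h'"] ab by auto
      then show False using codegree_one_unique[OF assms(6,2,4), of h'] h' by auto
    qed
    moreover obtain z where "z \<in> h \<inter> h'" "z \<noteq> w"
      using h' card_mono[of "{w}" "h \<inter> h'"] by fastforce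
    ultimately show "h' \<in> through a \<union> through b"
      using h' w ab assms(4) by (auto simp: through_def)
  qed
  then have "card {h' \<in> H. h' \<noteq> h \<and> 2 \<le> card (h \<inter> h')} \<le> card (through a \<union> through b)"
    using assms(1) by (intro card_mono) (auto simp: through_def)
  also have "\<dots> \<le> 2"
    using card_Un_le[of "through a" "through b"] through_le[of a] through_le[of b] ab by simp
  finally show ?thesis .
qed

text \<open>Hyperedges sharing two vertices are joined; this graph has maximum degree two,
  and an independent set in it is a linear subhypergraph.\<close>
lemma card_edges_without_heavy_pair_le:
  assumes H: "triple_hypergraph n H" and no_berge: "\<not> has_berge_cycle H m"
  shows "card {h \<in> H - saturated_edges H. \<forall>f\<subseteq>h. card f = 2 \<longrightarrow> codegree H f \<le> 2}
    \<le> 3 * ex3_lin n m" (is "card ?N \<le> _")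
proof -
  have fin: "finite H" using H by (rule triple_hypergraph_finite)
  let ?R = "\<lambda>A B :: nat set. 2 \<le> card (A \<inter> B)"
  have "card {h' \<in> ?N. h' \<noteq> h \<and> ?R h h'} \<le> 2" if "h \<in> ?N" for h
  proof -
    have "card {h' \<in> ?N. h' \<noteq> h \<and> ?R h h'} \<le> card {h' \<in> H. h' \<noteq> h \<and> ?R h h'}"
      using fin by (intro card_mono) auto
    also have "\<dots> \<le> 2"
      using card_overlapping_edges_le[OF fin _ _ _ _ _, of h "private_pair H h"]
        private_pair_spec[OF fin, of h] that H by (auto simp: triple_hypergraph_def)
    finally show ?thesis .
  qed
  then obtain I where I: "I \<subseteq> ?N" "\<forall>x\<in>I. \<forall>y\<in>I. x \<noteq> y \<longrightarrow> \<not> ?R x y" "card ?N \<le> 3 * card I"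
    using independent_subset_degree_bound[of ?N ?R 2] fin by (auto simp: Int_commute)
  have "card I \<le> ex3_lin n m"
  proof (rule card_le_ex3_lin)
    show "triple_hypergraph n I" using H I(1) by (auto simp: triple_hypergraph_def)
    show "linear_hypergraph I"
      unfolding linear_hypergraph_def
    proof (intro ballI impI)
      fix A B assume "A \<in> I" "B \<in> I" "A \<noteq> B"
      then have "\<not> 2 \<le> card (A \<inter> B)" using I(2) by blast
      then show "card (A \<inter> B) \<le> 1" by linarith
    qed
    show "\<not> has_berge_cycle I m" using no_berge I(1) has_berge_cycle_mono[of I m H] by auto
  qed
  with I(3) show ?thesis by linarith
qed

lemma card_le_odd_berge_cycle_free:
  assumes "2 \<le> k" "triple_hypergraph n H" "\<not> has_berge_cycle H (2 * k + 1)"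
  shows "card H \<le> t_tri (2 * k + 1) n + 4 * ex_graph n (2 * k) + 3 * ex3_lin n (2 * k + 1)"
proof -
  let ?M = "{h \<in> H - saturated_edges H. \<exists>f\<subseteq>h. card f = 2 \<and> 3 \<le> codegree H f}"
  let ?N = "{h \<in> H - saturated_edges H. \<forall>f\<subseteq>h. card f = 2 \<longrightarrow> codegree H f \<le> 2}"
  have "H \<subseteq> saturated_edges H \<union> ?M \<union> ?N" by (auto simp: not_le)
  then have "card H \<le> card (saturated_edges H) + card ?M + card ?N"
    using card_mono[OF _ \<open>H \<subseteq> _\<close>] card_Un_le[of "saturated_edges H \<union> ?M" ?N]
      card_Un_le[of "saturated_edges H" ?M] triple_hypergraph_finite[OF assms(2)]
    by (fastforce simp: saturated_edges_def)
  also have "\<dots> \<le> t_tri (2 * k + 1) n + 4 * ex_graph n (2 * k) + 3 * ex3_lin n (2 * k + 1)"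
    using card_saturated_edges_le_t_tri[OF assms(2,3)]
      card_edges_with_heavy_pair_le[of n H "2 * k"]
      card_edges_without_heavy_pair_le[OF assms(2,3)] assms by simp
  finally show ?thesis .
qed

theorem theorem2:
  fixes k n :: nat
  assumes "k \<ge> 2" and "n \<ge> 1"
  shows "ex3 n (2*k+1) \<le> t_tri (2*k+1) n + 4 * ex_graph n (2*k) + 12 * ex3_lin n (2*k+1)"
proof -
  have "ex3 n (2*k+1) \<le> t_tri (2*k+1) n + 4 * ex_graph n (2*k) + 3 * ex3_lin n (2*k+1)"
    by (rule ex3_le) (use card_le_odd_berge_cycle_free assms(1) in auto)
  then show ?thesis by simp
qed

end
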